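(* Consider a discounted Markov decision problem and the policy mirror descent method as described in the context, with $\pi^{(0)}\in\operatorname{rint}\Pi$ and constant step size $\eta_k=\eta>0$ for all $k\ge0$. Then for any $\rho\in\Delta(\mathcal{S})$ and all $k\ge0$, \[ V_\rho(\pi^{(k)})-V_\rho^\star\le\frac1{k+1}\left(\frac{D^\star_0}{\eta(1-\gamma)}+\frac1{(1-\gamma)^2}\right). \]
   Context: A discounted Markov decision problem (cost-minimization form): finite state set $\mathcal{S}$, finite action set $\mathcal{A}$, transition probabilities $P(s'|s,a)$, cost $R:\mathcal{S}\times\mathcal{A}\to[0,1]$, discount $\gamma\in[0,1)$. Policies $\Pi=\Delta(\mathcal{A})^{|\mathcal{S}|}$, $\pi=(\pi_s)_s$ with $\pi_s\in\Delta(\mathcal{A})$; $\operatorname{rint}\Pi$ is the set of policies with all entries $\pi_{s,a}>0$. $V_s(\pi)=\mathbf{E}\bigl[\sum_{t\ge0}\gamma^tR(s_t,a_t)\mid s_0=s\bigr]$ with $a_t\sim\pi_{s_t}$, $s_{t+1}\sim P(\cdot|s_t,a_t)$; $V_\rho(\pi)=\sum_s\rho_sV_s(\pi)$; $V^\star_\rho=\min_{\pi\in\Pi}V_\rho(\pi)$; $\pi^\star$ denotes a policy minimizing $V_s$ simultaneously for all $s$. $Q_{s,a}(\pi)=R_{s,a}+\gamma\sum_{s'}P(s'|s,a)V_{s'}(\pi)$, $Q_s(\pi)\in\mathbf{R}^{|\mathcal{A}|}$. Discounted state visitation: $d_{s,s'}(\pi)=(1-\gamma)\sum_{t\ge0}\gamma^t\Pr^\pi(s_t=s'\mid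 s_0=s)$, $d_{\rho,s'}(\pi)=\sum_s\rho_sd_{s,s'}(\pi)$. Bregman divergence: $h:\mathbf{R}^{|\mathcal{A}|}\to\mathbf{R}\cup\{+\infty\}$ is a convex function of Legendre type (proper, closed, essentially smooth, strictly convex on the relative interior of its domain) with $\Delta(\mathcal{A})\subseteq\operatorname{dom}h$ and $\operatorname{rint}\Delta(\mathcal{A})\subseteq\operatorname{rint}\operatorname{dom}h$ (e.g. $h=\frac12\|\cdot\|_2^2$, or negative entropy $h(p)=\sum_ap_a\log p_a$); $D(p,p')=h(p)-h(p')-\langle\nabla h(p'),p-p'\rangle$ for $p\in\operatorname{dom}h$, $p'\in\operatorname{rint}\operatorname{dom}h$. Policy mirror descent: given $\pi^{(0)}$ and step sizes $\eta_k>0$, for each $s\in\mathcal{S}$, $\pi^{(k+1)}_s=\arg\min_{p\in\Delta(\mathcal{A})}\{\eta_k\langle Q_s(\pi^{(k)}),p\rangle+D(p,\pi^{(k)}_s)\}$ (the iterates are well defined and remain in $\operatorname{rint}\operatorname{dom}h$). Notation: $D^\star_k=\sum_{s\in\mathcal{S}}d_{\rho,s}(\pi^\star)D(\pi^\star_s,\pi^{(k)}_s)$. *)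

theory Defs
  imports "HOL-Analysis.Analysis"
begin

definition act_simplex :: "(real ^ 'a::finite) set" where
  "act_simplex = {p. (\<forall>a. 0 \<le> p $ a) \<and> (\<Sum>a\<in>UNIV. p $ a) = 1}"

definition policies :: "('s::finite \<Rightarrow> real ^ 'a::finite) set" where
  "policies = {\<pi>. \<forall>s. \<pi> s \<in> act_simplex}"

definition rint_policies :: "('s::finite \<Rightarrow> real ^ 'a::finite) set" where
  "rint_policies = {\<pi>. \<forall>s. \<pi> s \<in> rel_interior act_simplex}"

definition is_mdp :: "('s::finite \<Rightarrow> 'a::finite \<Rightarrow> 's \<Rightarrow> real) \<Rightarrow> ('s \<Rightarrow> 'a \<Rightarrow> real) \<Rightarrow> real \<Rightarrow> bool" where
  "is_mdp P R \<gamma> \<longleftrightarrow>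
     (\<forall>s a s'. 0 \<le> P s a s') \<and> (\<forall>s a. (\<Sum>s'\<in>UNIV. P s a s') = 1) \<and>
     (\<forall>s a. 0 \<le> R s a \<and> R s a \<le> 1) \<and> 0 \<le> \<gamma> \<and> \<gamma> < 1"

definition Ppol :: "('s::finite \<Rightarrow> 'a::finite \<Rightarrow> 's \<Rightarrow> real) \<Rightarrow> ('s \<Rightarrow> real ^ 'a) \<Rightarrow> 's \<Rightarrow> 's \<Rightarrow> real" where
  "Ppol P \<pi> s s' = (\<Sum>a\<in>UNIV. \<pi> s $ a * P s a s')"

text \<open>t-step probabilities Pr^pi(s_t = s' | s_0 = s).\<close>
fun Pstep :: "('s::finite \<Rightarrow> 'a::finite \<Rightarrow> 's \<Rightarrow> real) \<Rightarrow> ('s \<Rightarrow> real ^ 'a) \<Rightarrow> nat \<Rightarrow> 's \<Rightarrow> 's \<Rightarrow> real" where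
  "Pstep P \<pi> 0 s s' = (if s = s' then 1 else 0)"
| "Pstep P \<pi> (Suc t) s s' = (\<Sum>s''\<in>UNIV. Pstep P \<pi> t s s'' * Ppol P \<pi> s'' s')"

text \<open>V_s(pi) = E[ sum_t gamma^t R(s_t,a_t) | s_0 = s ], written out:
  Pr(s_t = s', a_t = a) = Pstep t s s' * pi_{s'}(a).\<close>
definition V :: "('s::finite \<Rightarrow> 'a::finite \<Rightarrow> 's \<Rightarrow> real) \<Rightarrow> ('s \<Rightarrow> 'a \<Rightarrow> real) \<Rightarrow> real \<Rightarrow> ('s \<Rightarrow> real ^ 'a) \<Rightarrow> 's \<Rightarrow> real" where
  "V P R \<gamma> \<pi> s = (\<Sum>t. \<gamma> ^ t * (\<Sum>s'\<in>UNIV. \<Sum>a\<in>UNIV. Pstep P \<pi> t s s' * \<pi> s' $ a * R s' a))"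

definition Vrho :: "('s::finite \<Rightarrow> 'a::finite \<Rightarrow> 's \<Rightarrow> real) \<Rightarrow> ('s \<Rightarrow> 'a \<Rightarrow> real) \<Rightarrow> real \<Rightarrow> ('s \<Rightarrow> real) \<Rightarrow> ('s \<Rightarrow> real ^ 'a) \<Rightarrow> real" where
  "Vrho P R \<gamma> \<rho> \<pi> = (\<Sum>s\<in>UNIV. \<rho> s * V P R \<gamma> \<pi> s)"

definition Vstar :: "('s::finite \<Rightarrow> 'a::finite \<Rightarrow> 's \<Rightarrow> real) \<Rightarrow> ('s \<Rightarrow> 'a \<Rightarrow> real) \<Rightarrow> real \<Rightarrow> ('s \<Rightarrow> real) \<Rightarrow> real" where
  "Vstar P R \<gamma> \<rho> = (INF \<pi>\<in>policies. Vrho P R \<gamma> \<rho> \<pi>)"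

definition Q :: "('s::finite \<Rightarrow> 'a::finite \<Rightarrow> 's \<Rightarrow> real) \<Rightarrow> ('s \<Rightarrow> 'a \<Rightarrow> real) \<Rightarrow> real \<Rightarrow> ('s \<Rightarrow> real ^ 'a) \<Rightarrow> 's \<Rightarrow> real ^ 'a" where
  "Q P R \<gamma> \<pi> s = (\<chi> a. R s a + \<gamma> * (\<Sum>s'\<in>UNIV. P s a s' * V P R \<gamma> \<pi> s'))"

definition dvis :: "('s::finite \<Rightarrow> 'a::finite \<Rightarrow> 's \<Rightarrow> real) \<Rightarrow> real \<Rightarrow> ('s \<Rightarrow> real ^ 'a) \<Rightarrow> 's \<Rightarrow> 's \<Rightarrow> real" where
  "dvis P \<gamma> \<pi> s s' = (1 - \<gamma>) * (\<Sum>t. \<gamma> ^ t * Pstep P \<pi> t s s')"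

definition drho :: "('s::finite \<Rightarrow> 'a::finite \<Rightarrow> 's \<Rightarrow> real) \<Rightarrow> real \<Rightarrow> ('s \<Rightarrow> real) \<Rightarrow> ('s \<Rightarrow> real ^ 'a) \<Rightarrow> 's \<Rightarrow> real" where
  "drho P \<gamma> \<rho> \<pi> s' = (\<Sum>s\<in>UNIV. \<rho> s * dvis P \<gamma> \<pi> s s')"

text \<open>An extended-real convex function h : R^|A| -> R \<union> {+oo} is represented by its
  effective domain C = dom h and its (finite) values h on C; h = +oo outside C.\<close>
definition legendre :: "(real ^ 'a::finite) set \<Rightarrow> (real ^ 'a \<Rightarrow> real) \<Rightarrow> bool" where
  "legendre C h \<longleftrightarrow>
     C \<noteq> {} \<and> convex C \<and> convex_on C h \<and>
     closed {(x, t). x \<in> C \<and> h x \<le> t} \<and>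
     interior C \<noteq> {} \<and>
     (\<forall>x\<in>interior C. h differentiable (at x)) \<and>
     (\<forall>X x. (\<forall>n. X n \<in> interior C) \<longrightarrow> X \<longlonglongrightarrow> x \<longrightarrow> x \<in> frontier C \<longrightarrow>
        filterlim (\<lambda>n. onorm (frechet_derivative h (at (X n)))) at_top sequentially) \<and>
     (\<forall>x\<in>interior C. \<forall>y\<in>interior C. x \<noteq> y \<longrightarrow> (\<forall>u::real. 0 < u \<and> u < 1 \<longrightarrow>
        h ((1 - u) *\<^sub>R x + u *\<^sub>R y) < (1 - u) * h x + u * h y))"

definition bregman :: "(real ^ 'a::finite \<Rightarrow> real) \<Rightarrow> real ^ 'a \<Rightarrow> real ^ 'a \<Rightarrow> real" where
  "bregman h p p' = h p - h p' - frechet_derivative h (at p') (p - p')"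

definition is_pmd :: "('s::finite \<Rightarrow> 'a::finite \<Rightarrow> 's \<Rightarrow> real) \<Rightarrow> ('s \<Rightarrow> 'a \<Rightarrow> real) \<Rightarrow> real
    \<Rightarrow> (real ^ 'a \<Rightarrow> real) \<Rightarrow> (nat \<Rightarrow> real) \<Rightarrow> (nat \<Rightarrow> 's \<Rightarrow> real ^ 'a) \<Rightarrow> bool" where
  "is_pmd P R \<gamma> h \<eta> \<pi> \<longleftrightarrow>
     (\<forall>k s. is_arg_min (\<lambda>p. \<eta> k * inner (Q P R \<gamma> (\<pi> k) s) p + bregman h p (\<pi> k s))
                        (\<lambda>p. p \<in> act_simplex) (\<pi> (Suc k) s))"

end

theory Submission
  imports Defs
begin

(* Each mirror step is a Bregman proximal step, so by the three-point lemma, for every state s and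
   every p in the simplex,
     eta <Q_s(pi_k), pi_{k+1,s} - p> + D(pi_{k+1,s}, pi_{k,s}) <= D(p, pi_{k,s}) - D(p, pi_{k+1,s}).
   With p = pi_{k,s} the linearised improvement is nonpositive in every state; as d_{s,s} >= 1 - gamma,
   the performance difference lemma then gives
     V_s(pi_{k+1}) - V_s(pi_k) <= <Q_s(pi_k), pi_{k+1,s} - pi_{k,s}> <= 0.
   With p = pi_star_s, weighting by d_rho(pi_star) and applying the performance difference lemma
   again, eta (1 - gamma) (V_rho(pi_k) - V_rho(pi_star)) is at most the decrease of D*_k plus the
   decrease of the potential sum_s d_{rho,s}(pi_star) V_s(pi_k), which stays in [0, 1/(1 - gamma)].
   Telescoping and the monotonicity of V_rho(pi_k) give the O(1/k) rate.  Essential smoothness of h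
   keeps all iterates in the interior of dom h, where h is differentiable, so that the divergences
   D(., pi_{k,s}) and the three-point lemma are meaningful. *)

section \<open>Convex functions and Bregman divergences\<close>

lemma has_derivative_directional_le:
  fixes f :: "'v::real_normed_vector \<Rightarrow> real"
  assumes f: "(f has_derivative D) (at x)"
    and le: "\<And>t. 0 < t \<Longrightarrow> t \<le> 1 \<Longrightarrow> f (x + t *\<^sub>R d) \<le> f x + t * c"
  shows "D d \<le> c"
proof -
  have "((\<lambda>t. x + t *\<^sub>R d) has_derivative (\<lambda>t. t *\<^sub>R d)) (at 0)"
    by (auto intro!: derivative_eq_intros)
  from has_derivative_compose[OF this, of f D] f
  have "((\<lambda>t. f (x + t *\<^sub>R d)) has_derivative (\<lambda>t. D d * t)) (at 0)"
    using has_derivative_linear[OF f] by (simp add: linear_scale mult.commute)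
  then have "((\<lambda>t. f (x + t *\<^sub>R d)) has_real_derivative D d) (at 0)"
    by (simp add: has_field_derivative_def)
  then have "((\<lambda>t. (f (x + t *\<^sub>R d) - f x) / t) \<longlongrightarrow> D d) (at_right 0)"
    unfolding has_field_derivative_iff by (auto intro: tendsto_mono at_le)
  moreover have "eventually (\<lambda>t. (f (x + t *\<^sub>R d) - f x) / t \<le> c) (at_right 0)"
    using eventually_at_right_real[OF zero_less_one]
  proof eventually_elim
    case (elim t)
    then show ?case using le[of t] by (simp add: divide_le_eq mult.commute)
  qed
  ultimately show ?thesis
    by (rule tendsto_upperbound) simp
qed

lemma has_derivative_directional_ge:
  fixes f :: "'v::real_normed_vector \<Rightarrow> real"
  assumes "(f has_derivative D) (at x)"
    and "\<And>t. 0 < t \<Longrightarrow> t \<le> 1 \<Longrightarrow> f x + t * c \<le> f (x + t *\<^sub>R d)"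
  shows "c \<le> D d"
proof -
  have "((\<lambda>y. - f y) has_derivative (\<lambda>y. - D y)) (at x)"
    using assms(1) by (rule has_derivative_minus)
  then have "- D d \<le> - c"
    by (rule has_derivative_directional_le) (use assms(2) in fastforce)
  then show ?thesis by simp
qed

lemma convex_on_has_derivative_above_tangent:
  fixes h :: "'v::real_normed_vector \<Rightarrow> real"
  assumes "convex_on C h" "x \<in> C" "z \<in> C" and h: "(h has_derivative D) (at x)"
  shows "h x + D (z - x) \<le> h z"
proof -
  have "D (z - x) \<le> h z - h x"
  proof (rule has_derivative_directional_le[OF h])
    fix t :: real assume "0 < t" "t \<le> 1"
    then have "h ((1 - t) *\<^sub>R x + t *\<^sub>R z) \<le> (1 - t) * h x + t * h z"
      using assms by (intro convex_onD) auto
    moreover have "(1 - t) *\<^sub>R x + t *\<^sub>R z = x + t *\<^sub>R (z - x)"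
      by (simp add: algebra_simps)
    ultimately show "h (x + t *\<^sub>R (z - x)) \<le> h x + t * (h z - h x)"
      by (simp add: algebra_simps)
  qed
  then show ?thesis by simp
qed

lemma convex_on_has_derivative_onorm_le:
  fixes h :: "'v::{real_normed_vector, perfect_space} \<Rightarrow> real"
  assumes cvx: "convex_on C h" and x: "x \<in> C" and h: "(h has_derivative D) (at x)"
    and ball: "cball u \<epsilon> \<subseteq> C" and "0 < \<epsilon>" and K: "\<And>z. z \<in> cball u \<epsilon> \<Longrightarrow> h z \<le> K"
  shows "onorm D \<le> (K - h x - D (u - x)) / \<epsilon>"
proof -
  have lin: "linear D" using h by (rule has_derivative_linear)
  define M where "M = K - h x - D (u - x)"
  have M: "D w \<le> M" if "norm w \<le> \<epsilon>" for w
  proof -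
    have "u + w \<in> cball u \<epsilon>" using that by (simp add: dist_norm)
    with convex_on_has_derivative_above_tangent[OF cvx x _ h, of "u + w"] K ball
    have "h x + D (u + w - x) \<le> K" by force
    moreover have "D (u + w - x) = D (u - x) + D w"
      using lin by (simp add: linear_add[symmetric] algebra_simps)
    ultimately show ?thesis by (simp add: M_def)
  qed
  have "\<bar>D y\<bar> \<le> M / \<epsilon> * norm y" for y
  proof (cases "y = 0")
    case True
    then show ?thesis using lin by (simp add: linear_0)
  next
    case False
    let ?c = "\<epsilon> / norm y"
    have "?c * D y \<le> M" "?c * D (- y) \<le> M"
      using M[of "?c *\<^sub>R y"] M[of "?c *\<^sub>R - y"] lin \<open>0 < \<epsilon>\<close> False
      by (simp_all add: linear_scale del: scaleR_minus_right)
    then have "?c * \<bar>D y\<bar> \<le> M"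
      using lin by (cases "0 \<le> D y") (auto simp: linear_neg)
    with False \<open>0 < \<epsilon>\<close> show ?thesis
      by (simp add: field_simps)
  qed
  then show ?thesis unfolding M_def by (intro onorm_le) simp
qed

lemma convex_on_minimizer_segment_onorm_le:
  fixes h :: "'v::{real_normed_vector, perfect_space} \<Rightarrow> real"
  assumes cvx: "convex_on C h" and S: "convex S" "S \<subseteq> C" and p: "p \<in> S" and u: "u \<in> S"
    and l: "linear l" and min: "\<And>q. q \<in> S \<Longrightarrow> h p + l p \<le> h q + l q"
    and t: "0 < t" "t \<le> 1"
    and Dy: "(h has_derivative Dy) (at (p + t *\<^sub>R (u - p)))" and Du: "(h has_derivative Du) (at u)"
    and ball: "cball u \<epsilon> \<subseteq> C" "0 < \<epsilon>" and K: "\<And>z. z \<in> cball u \<epsilon> \<Longrightarrow> h z \<le> K"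
  shows "onorm Dy \<le> (K - h u + \<bar>Du (u - p)\<bar> + \<bar>l (u - p)\<bar>) / \<epsilon>"
proof -
  define v where "v = u - p"
  let ?y = "p + t *\<^sub>R v"
  have "?y \<in> S"
    using convexD_alt[OF S(1) p u] t by (simp add: v_def algebra_simps)
  then have y: "?y \<in> C" using S by auto
  have lin: "linear Dy" "linear Du" using Dy Du by (auto intro: has_derivative_linear)
  have "h ?y + Dy (p - ?y) \<le> h p"
    using convex_on_has_derivative_above_tangent[OF cvx y _ Dy[folded v_def]] p S by blast
  moreover have "h p + l p \<le> h ?y + l ?y" using min \<open>?y \<in> S\<close> by simp
  ultimately have "t * - Dy v \<le> t * l v"
    using lin l by (simp add: linear_add linear_scale linear_neg)
  then have descent: "- Dy v \<le> l v" using t by (simp only: mult_le_cancel_left_pos)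
  have "h u + Du (?y - u) \<le> h ?y"
    using convex_on_has_derivative_above_tangent[OF cvx _ y Du] u S by blast
  moreover have "?y - u = (t - 1) *\<^sub>R v" by (simp add: v_def algebra_simps)
  then have "Du (?y - u) = (t - 1) * Du v" using lin by (simp add: linear_scale)
  moreover have "\<bar>(t - 1) * Du v\<bar> \<le> \<bar>Du v\<bar>"
    using t by (simp add: abs_mult mult_left_le_one_le)
  ultimately have "h u - \<bar>Du v\<bar> \<le> h ?y" by linarith
  moreover have "u - ?y = (1 - t) *\<^sub>R v" by (simp add: v_def algebra_simps)
  then have "Dy (u - ?y) = (1 - t) * Dy v" using lin by (simp add: linear_scale)
  moreover have "(1 - t) * - Dy v \<le> (1 - t) * l v"
    using descent t by (intro mult_left_mono) auto
  moreover have "\<bar>(1 - t) * l v\<bar> \<le> \<bar>l v\<bar>"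
    using t by (simp add: abs_mult mult_left_le_one_le)
  ultimately have "K - h ?y - Dy (u - ?y) \<le> K - h u + \<bar>Du v\<bar> + \<bar>l v\<bar>"
    by linarith
  then have "(K - h ?y - Dy (u - ?y)) / \<epsilon> \<le> (K - h u + \<bar>Du v\<bar> + \<bar>l v\<bar>) / \<epsilon>"
    using ball(2) by (simp add: divide_right_mono)
  moreover have "onorm Dy \<le> (K - h ?y - Dy (u - ?y)) / \<epsilon>"
    by (rule convex_on_has_derivative_onorm_le[OF cvx y Dy[folded v_def] ball K])
  ultimately show ?thesis by (simp add: v_def)
qed

text \<open>If the minimiser \<open>p\<close> lay on the boundary of \<open>C\<close>, essential smoothness would make the
  gradient of \<open>h\<close> blow up along the segment from \<open>p\<close> to \<open>u\<close>, where the previous lemma bounds it.\<close>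

lemma legendre_minimizer_in_interior:
  fixes h :: "real ^ 'a::finite \<Rightarrow> real"
  assumes leg: "legendre C h" and S: "convex S" "S \<subseteq> C" and u: "u \<in> S" "u \<in> interior C"
    and l: "linear l" and p: "p \<in> S" and min: "\<And>q. q \<in> S \<Longrightarrow> h p + l p \<le> h q + l q"
  shows "p \<in> interior C"
proof (rule ccontr)
  assume "p \<notin> interior C"
  with p S have "p \<in> frontier C"
    using closure_subset by (auto simp: frontier_def)
  with leg have blowup: "filterlim (\<lambda>n. onorm (frechet_derivative h (at (X n)))) at_top sequentially"
    if "\<And>n. X n \<in> interior C" "X \<longlonglongrightarrow> p" for X
    using that unfolding legendre_def by blast
  from leg have "convex C" and cvx: "convex_on C h" and "\<forall>x\<in>interior C. h differentiable (at x)"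
    unfolding legendre_def by auto
  define Dh where "Dh x = frechet_derivative h (at x)" for x
  have Dh: "(h has_derivative Dh x) (at x)" if "x \<in> interior C" for x
    using \<open>\<forall>x\<in>interior C. h differentiable (at x)\<close> that
    unfolding Dh_def frechet_derivative_works[symmetric] by blast
  have seg_interior: "p + t *\<^sub>R (u - p) \<in> interior C" if "0 < t" "t \<le> 1" for t
    using mem_interior_closure_convex_shrink[OF \<open>convex C\<close> u(2), of p t] p S closure_subset that
    by (force simp: algebra_simps)
  obtain \<epsilon> where "\<epsilon> > 0" and ball: "cball u \<epsilon> \<subseteq> interior C"
    using u(2) open_interior open_contains_cball by blast
  then have "cball u \<epsilon> \<subseteq> C" using interior_subset by blast
  have "continuous_on (cball u \<epsilon>) h"
    using ball Dh by (meson continuous_at_imp_continuous_on has_derivative_continuous subsetD)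
  then obtain K where K: "\<And>z. z \<in> cball u \<epsilon> \<Longrightarrow> h z \<le> K"
    using compact_continuous_image[of "cball u \<epsilon>" h] compact_imp_bounded bounded_real
    by (metis abs_le_D1 compact_cball imageI)
  define B where "B = (K - h u + \<bar>Dh u (u - p)\<bar> + \<bar>l (u - p)\<bar>) / \<epsilon>"
  define X where "X = (\<lambda>n. p + inverse (real (Suc n)) *\<^sub>R (u - p))"
  have X: "X n \<in> interior C" for n
    unfolding X_def by (rule seg_interior) (auto simp: field_simps)
  have "X \<longlonglongrightarrow> p + 0 *\<^sub>R (u - p)"
    unfolding X_def by (intro tendsto_intros LIMSEQ_inverse_real_of_nat)
  then have "eventually (\<lambda>n. B + 1 \<le> onorm (Dh (X n))) sequentially"
    using blowup[OF X] unfolding filterlim_at_top Dh_def by simp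
  then obtain n where "B + 1 \<le> onorm (Dh (X n))"
    by (auto simp: eventually_sequentially)
  moreover have "onorm (Dh (X n)) \<le> B"
    unfolding B_def X_def
    by (rule convex_on_minimizer_segment_onorm_le[OF cvx S p u(1) l min _ _
          Dh[OF X[unfolded X_def]] Dh[OF u(2)] \<open>cball u \<epsilon> \<subseteq> C\<close> \<open>\<epsilon> > 0\<close> K])
       (auto simp: field_simps)
  ultimately show False by simp
qed

lemma bregman_self:
  assumes "h differentiable (at x)"
  shows "bregman h x x = 0"
  using assms has_derivative_linear frechet_derivative_works
  by (fastforce simp: bregman_def linear_0)

lemma bregman_nonneg:
  assumes "convex_on C h" "p \<in> C" "x \<in> C" "h differentiable (at x)"
  shows "0 \<le> bregman h p x"
proof -
  have "(h has_derivative frechet_derivative h (at x)) (at x)"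
    using assms(4) frechet_derivative_works by blast
  from convex_on_has_derivative_above_tangent[OF assms(1,3,2) this] show ?thesis
    by (simp add: bregman_def)
qed

lemma bregman_three_point_identity:
  assumes "h differentiable (at x)"
  shows "bregman h p x = bregman h p y + bregman h y x
           + (frechet_derivative h (at y) (p - y) - frechet_derivative h (at x) (p - y))"
proof -
  have "linear (frechet_derivative h (at x))"
    using assms frechet_derivative_works has_derivative_linear by blast
  then have "frechet_derivative h (at x) (p - x)
      = frechet_derivative h (at x) (p - y) + frechet_derivative h (at x) (y - x)"
    by (simp add: linear_add[symmetric])
  then show ?thesis by (simp add: bregman_def)
qed

lemma bregman_prox_three_point:
  assumes x: "h differentiable (at x)" and y: "h differentiable (at y)"
    and "convex S" "y \<in> S" "p \<in> S"
    and min: "\<And>z. z \<in> S \<Longrightarrow> inner q y + bregman h y x \<le> inner q z + bregman h z x"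
  shows "inner q y + bregman h y x + bregman h p y \<le> inner q p + bregman h p x"
proof -
  define Dx where "Dx = frechet_derivative h (at x)"
  define Dy where "Dy = frechet_derivative h (at y)"
  have "bounded_linear Dx"
    using x has_derivative_bounded_linear frechet_derivative_works Dx_def by blast
  have "((\<lambda>z. inner q z + bregman h z x) has_derivative (\<lambda>d. inner q d + (Dy d - 0 - Dx (d - 0)))) (at y)"
    unfolding bregman_def Dx_def[symmetric] using y unfolding Dy_def frechet_derivative_works
    by (intro derivative_intros bounded_linear.has_derivative[OF \<open>bounded_linear Dx\<close>]) auto
  then have "0 \<le> inner q (p - y) + (Dy (p - y) - 0 - Dx (p - y - 0))"
  proof (rule has_derivative_directional_ge)
    fix t :: real assume "0 < t" "t \<le> 1"
    then have "(1 - t) *\<^sub>R y + t *\<^sub>R p \<in> S"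
      using convexD_alt[OF \<open>convex S\<close> \<open>y \<in> S\<close> \<open>p \<in> S\<close>] by simp
    moreover have "(1 - t) *\<^sub>R y + t *\<^sub>R p = y + t *\<^sub>R (p - y)" by (simp add: algebra_simps)
    ultimately show "inner q y + bregman h y x + t * 0
        \<le> inner q (y + t *\<^sub>R (p - y)) + bregman h (y + t *\<^sub>R (p - y)) x"
      using min by simp
  qed
  then show ?thesis
    using bregman_three_point_identity[OF x, of p y]
    by (simp add: Dx_def Dy_def inner_diff_right)
qed

section \<open>Discounted Markov decision problems\<close>

lemma abs_convex_combination_le:
  fixes w f :: "'s::finite \<Rightarrow> real"
  assumes "\<And>x. 0 \<le> w x" "(\<Sum>x\<in>UNIV. w x) = 1" "\<And>x. \<bar>f x\<bar> \<le> B"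
  shows "\<bar>\<Sum>x\<in>UNIV. w x * f x\<bar> \<le> B"
proof -
  have "\<bar>\<Sum>x\<in>UNIV. w x * f x\<bar> \<le> (\<Sum>x\<in>UNIV. w x * B)"
    using sum_abs[of "\<lambda>x. w x * f x" UNIV] sum_mono[of UNIV "\<lambda>x. \<bar>w x * f x\<bar>" "\<lambda>x. w x * B"] assms
    by (fastforce simp: abs_mult mult_left_mono)
  also have "\<dots> = B" using assms(2) by (simp add: sum_distrib_right[symmetric])
  finally show ?thesis .
qed

lemma policies_nonneg: "\<pi> \<in> policies \<Longrightarrow> 0 \<le> \<pi> s $ a"
  by (simp add: policies_def act_simplex_def)

lemma policies_sum_eq_1: "\<pi> \<in> policies \<Longrightarrow> (\<Sum>a\<in>UNIV. \<pi> s $ a) = 1"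
  by (simp add: policies_def act_simplex_def)

lemma convex_act_simplex: "convex (act_simplex :: (real ^ 'a::finite) set)"
proof (rule convexI)
  fix x y :: "real ^ 'a" and u v :: real
  assume "x \<in> act_simplex" "y \<in> act_simplex" "0 \<le> u" "0 \<le> v" "u + v = 1"
  moreover have "(\<Sum>a\<in>UNIV. (u *\<^sub>R x + v *\<^sub>R y) $ a) = u * (\<Sum>a\<in>UNIV. x $ a) + v * (\<Sum>a\<in>UNIV. y $ a)"
    by (simp add: sum.distrib sum_distrib_left)
  ultimately show "u *\<^sub>R x + v *\<^sub>R y \<in> act_simplex"
    unfolding act_simplex_def by (auto intro!: add_nonneg_nonneg mult_nonneg_nonneg)
qed

definition pol_cost :: "('s::finite \<Rightarrow> 'a::finite \<Rightarrow> real) \<Rightarrow> ('s \<Rightarrow> real ^ 'a) \<Rightarrow> 's \<Rightarrow> real" where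
  "pol_cost R \<pi> s = (\<Sum>a\<in>UNIV. \<pi> s $ a * R s a)"

definition discounted_sum :: "('s::finite \<Rightarrow> 'a::finite \<Rightarrow> 's \<Rightarrow> real) \<Rightarrow> real
    \<Rightarrow> ('s \<Rightarrow> real ^ 'a) \<Rightarrow> ('s \<Rightarrow> real) \<Rightarrow> 's \<Rightarrow> real" where
  "discounted_sum P \<gamma> \<pi> f s = (\<Sum>t. \<gamma> ^ t * (\<Sum>s'\<in>UNIV. Pstep P \<pi> t s s' * f s'))"

locale mdp =
  fixes P :: "'s::finite \<Rightarrow> 'a::finite \<Rightarrow> 's \<Rightarrow> real" and R :: "'s \<Rightarrow> 'a \<Rightarrow> real" and \<gamma> :: real
  assumes is_mdp: "is_mdp P R \<gamma>"
begin

lemma P_nonneg: "0 \<le> P s a s'"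
  and P_sum_eq_1: "(\<Sum>s'\<in>UNIV. P s a s') = 1"
  and R_nonneg: "0 \<le> R s a"
  and R_le_1: "R s a \<le> 1"
  and discount_nonneg: "0 \<le> \<gamma>"
  and discount_less_1: "\<gamma> < 1"
  using is_mdp by (auto simp: is_mdp_def)

lemma Ppol_nonneg: "\<pi> \<in> policies \<Longrightarrow> 0 \<le> Ppol P \<pi> s s'"
  unfolding Ppol_def by (intro sum_nonneg mult_nonneg_nonneg policies_nonneg P_nonneg)

lemma Ppol_sum_eq_1: "\<pi> \<in> policies \<Longrightarrow> (\<Sum>s'\<in>UNIV. Ppol P \<pi> s s') = 1"
  unfolding Ppol_def
  by (subst sum.swap) (simp add: sum_distrib_left[symmetric] P_sum_eq_1 policies_sum_eq_1)

lemma Pstep_nonneg: "\<pi> \<in> policies \<Longrightarrow> 0 \<le> Pstep P \<pi> t s s'"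
  by (induction t arbitrary: s') (auto intro!: sum_nonneg mult_nonneg_nonneg Ppol_nonneg)

lemma Pstep_sum_eq_1: "\<pi> \<in> policies \<Longrightarrow> (\<Sum>s'\<in>UNIV. Pstep P \<pi> t s s') = 1"
proof (induction t)
  case (Suc t)
  have "(\<Sum>s'\<in>UNIV. Pstep P \<pi> (Suc t) s s')
      = (\<Sum>s''\<in>UNIV. Pstep P \<pi> t s s'' * (\<Sum>s'\<in>UNIV. Ppol P \<pi> s'' s'))"
    by (simp add: sum_distrib_left) (rule sum.swap)
  with Suc show ?case by (simp add: Ppol_sum_eq_1)
qed simp

lemma Pstep_le_1: "\<pi> \<in> policies \<Longrightarrow> Pstep P \<pi> t s s' \<le> 1"
  using member_le_sum[of s' UNIV "Pstep P \<pi> t s"] Pstep_sum_eq_1 Pstep_nonneg by auto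

lemma Pstep_add: "Pstep P \<pi> (m + n) s s' = (\<Sum>u\<in>UNIV. Pstep P \<pi> m s u * Pstep P \<pi> n u s')"
proof (induction n arbitrary: s')
  case (Suc n)
  have "Pstep P \<pi> (m + Suc n) s s'
      = (\<Sum>w\<in>UNIV. (\<Sum>u\<in>UNIV. Pstep P \<pi> m s u * Pstep P \<pi> n u w) * Ppol P \<pi> w s')"
    by (simp add: Suc)
  also have "\<dots> = (\<Sum>u\<in>UNIV. Pstep P \<pi> m s u * (\<Sum>w\<in>UNIV. Pstep P \<pi> n u w * Ppol P \<pi> w s'))"
    by (simp add: sum_distrib_left sum_distrib_right mult.assoc) (rule sum.swap)
  finally show ?case by simp
qed (simp add: if_distrib cong: if_cong)

lemma Pstep_Suc_left: "Pstep P \<pi> (Suc t) s s' = (\<Sum>u\<in>UNIV. Ppol P \<pi> s u * Pstep P \<pi> t u s')"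
  using Pstep_add[of \<pi> 1 t s s'] by (simp add: if_distrib[of "\<lambda>x. x * _"] cong: if_cong)

lemma summable_discounted_Pstep: "\<pi> \<in> policies \<Longrightarrow> summable (\<lambda>t. \<gamma> ^ t * Pstep P \<pi> t s s')"
proof (rule summable_comparison_test')
  show "summable (\<lambda>t. \<gamma> ^ t)"
    using discount_nonneg discount_less_1 by (simp add: summable_geometric)
  show "norm (\<gamma> ^ t * Pstep P \<pi> t s s') \<le> \<gamma> ^ t" if "\<pi> \<in> policies" for t
    using that Pstep_le_1 Pstep_nonneg discount_nonneg by (simp add: abs_mult mult_left_le)
qed

lemma discounted_sum_eq_dvis:
  assumes "\<pi> \<in> policies"
  shows "discounted_sum P \<gamma> \<pi> f s = (\<Sum>s'\<in>UNIV. dvis P \<gamma> \<pi> s s' * f s') / (1 - \<gamma>)"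
proof -
  have "discounted_sum P \<gamma> \<pi> f s = (\<Sum>t. \<Sum>s'\<in>UNIV. \<gamma> ^ t * Pstep P \<pi> t s s' * f s')"
    unfolding discounted_sum_def by (simp add: sum_distrib_left mult.assoc)
  also have "\<dots> = (\<Sum>s'\<in>UNIV. (\<Sum>t. \<gamma> ^ t * Pstep P \<pi> t s s') * f s')"
    using assms
    by (subst suminf_sum) (auto intro!: sum.cong suminf_mult2[symmetric] summable_mult2 summable_discounted_Pstep)
  also have "\<dots> = (\<Sum>s'\<in>UNIV. dvis P \<gamma> \<pi> s s' * f s') / (1 - \<gamma>)"
    using discount_less_1 by (simp add: dvis_def sum_divide_distrib)
  finally show ?thesis .
qed

lemma summable_discounted_sum:
  assumes "\<pi> \<in> policies"
  shows "summable (\<lambda>t. \<gamma> ^ t * (\<Sum>s'\<in>UNIV. Pstep P \<pi> t s s' * f s'))"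
proof -
  have "summable (\<lambda>t. \<Sum>s'\<in>UNIV. \<gamma> ^ t * Pstep P \<pi> t s s' * f s')"
    using assms by (intro summable_sum summable_mult2 summable_discounted_Pstep)
  then show ?thesis by (simp add: sum_distrib_left mult.assoc)
qed

lemma discounted_sum_bellman:
  assumes "\<pi> \<in> policies"
  shows "discounted_sum P \<gamma> \<pi> f s = f s + \<gamma> * (\<Sum>u\<in>UNIV. Ppol P \<pi> s u * discounted_sum P \<gamma> \<pi> f u)"
proof -
  define a where "a s t = \<gamma> ^ t * (\<Sum>s'\<in>UNIV. Pstep P \<pi> t s s' * f s')" for s t
  have summable: "summable (a u)" for u
    unfolding a_def using assms by (rule summable_discounted_sum)
  have "a s (Suc t) = \<gamma> * (\<Sum>u\<in>UNIV. Ppol P \<pi> s u * a u t)" for t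
  proof -
    have "(\<Sum>s'\<in>UNIV. Pstep P \<pi> (Suc t) s s' * f s')
        = (\<Sum>u\<in>UNIV. Ppol P \<pi> s u * (\<Sum>s'\<in>UNIV. Pstep P \<pi> t u s' * f s'))"
      unfolding Pstep_Suc_left sum_distrib_right sum_distrib_left
      by (subst sum.swap) (simp add: mult.assoc)
    then show ?thesis by (simp add: a_def sum_distrib_left algebra_simps)
  qed
  then have "(\<Sum>t. a s (Suc t)) = \<gamma> * (\<Sum>t. \<Sum>u\<in>UNIV. Ppol P \<pi> s u * a u t)"
    using summable by (simp add: suminf_mult summable_sum summable_mult)
  also have "\<dots> = \<gamma> * (\<Sum>u\<in>UNIV. Ppol P \<pi> s u * (\<Sum>t. a u t))"
    using summable by (simp add: suminf_sum suminf_mult summable_mult)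
  also have "(\<lambda>u. \<Sum>t. a u t) = discounted_sum P \<gamma> \<pi> f"
    by (simp add: fun_eq_iff a_def discounted_sum_def)
  finally have "(\<Sum>t. a s (Suc t)) = \<gamma> * (\<Sum>u\<in>UNIV. Ppol P \<pi> s u * discounted_sum P \<gamma> \<pi> f u)" .
  moreover have "a s 0 = f s"
    by (simp add: a_def if_distrib[of "\<lambda>x. x * _"] cong: if_cong)
  moreover have "discounted_sum P \<gamma> \<pi> f s = (\<Sum>t. a s t)"
    by (simp add: a_def discounted_sum_def)
  ultimately show ?thesis
    using suminf_split_head[OF summable[of s]] by linarith
qed

lemma discounted_sum_unique:
  assumes \<pi>: "\<pi> \<in> policies"
    and x: "\<And>s. x s = f s + \<gamma> * (\<Sum>u\<in>UNIV. Ppol P \<pi> s u * x u)"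
  shows "x s = discounted_sum P \<gamma> \<pi> f s"
proof -
  define e where "e s = x s - discounted_sum P \<gamma> \<pi> f s" for s
  have e: "e s = \<gamma> * (\<Sum>u\<in>UNIV. Ppol P \<pi> s u * e u)" for s
    using x[of s] discounted_sum_bellman[OF \<pi>, of f s]
    by (simp add: e_def algebra_simps sum_subtractf)
  define M where "M = Max (range (\<lambda>s. \<bar>e s\<bar>))"
  have M: "\<bar>e s\<bar> \<le> M" for s unfolding M_def by (rule Max_ge) auto
  have "M \<in> range (\<lambda>s. \<bar>e s\<bar>)" unfolding M_def by (rule Max_in) auto
  then obtain s0 where "M = \<bar>e s0\<bar>" by blast
  also have "\<dots> \<le> \<gamma> * M"
    using e[of s0] abs_convex_combination_le[of "Ppol P \<pi> s0" e M] Ppol_nonneg[OF \<pi>] Ppol_sum_eq_1[OF \<pi>] M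
      discount_nonneg by (simp add: abs_mult mult_left_mono)
  finally have "M \<le> 0"
    using discount_less_1 M[of s] by (smt (verit) mult_le_cancel_right1)
  then show ?thesis using M[of s] by (simp add: e_def)
qed

lemma dvis_nonneg: "\<pi> \<in> policies \<Longrightarrow> 0 \<le> dvis P \<gamma> \<pi> s s'"
  unfolding dvis_def using discount_less_1 discount_nonneg
  by (intro mult_nonneg_nonneg suminf_nonneg summable_discounted_Pstep) (auto intro: Pstep_nonneg)

lemma dvis_sum_eq_1:
  assumes "\<pi> \<in> policies"
  shows "(\<Sum>s'\<in>UNIV. dvis P \<gamma> \<pi> s s') = 1"
proof -
  have "discounted_sum P \<gamma> \<pi> (\<lambda>_. 1) s = (\<Sum>t. \<gamma> ^ t)"
    unfolding discounted_sum_def using Pstep_sum_eq_1[OF assms] by simp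
  also have "\<dots> = 1 / (1 - \<gamma>)"
    using suminf_geometric[of \<gamma>] discount_nonneg discount_less_1 by simp
  finally show ?thesis
    using discounted_sum_eq_dvis[OF assms, of "\<lambda>_. 1" s] discount_less_1 by (simp add: field_simps)
qed

lemma dvis_diag_ge:
  assumes "\<pi> \<in> policies"
  shows "1 - \<gamma> \<le> dvis P \<gamma> \<pi> s s"
proof -
  have "(\<Sum>t<1. \<gamma> ^ t * Pstep P \<pi> t s s) \<le> (\<Sum>t. \<gamma> ^ t * Pstep P \<pi> t s s)"
    using assms discount_nonneg Pstep_nonneg
    by (intro sum_le_suminf summable_discounted_Pstep) auto
  then show ?thesis
    using discount_less_1 by (simp add: dvis_def)
qed

lemma drho_nonneg: "\<pi> \<in> policies \<Longrightarrow> \<forall>s. 0 \<le> \<rho> s \<Longrightarrow> 0 \<le> drho P \<gamma> \<rho> \<pi> s'"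
  unfolding drho_def by (simp add: sum_nonneg dvis_nonneg)

lemma drho_sum_eq_1:
  assumes "\<pi> \<in> policies" "(\<Sum>s\<in>UNIV. \<rho> s) = 1"
  shows "(\<Sum>s'\<in>UNIV. drho P \<gamma> \<rho> \<pi> s') = 1"
proof -
  have "(\<Sum>s'\<in>UNIV. drho P \<gamma> \<rho> \<pi> s') = (\<Sum>s\<in>UNIV. \<rho> s * (\<Sum>s'\<in>UNIV. dvis P \<gamma> \<pi> s s'))"
    unfolding drho_def sum_distrib_left by (rule sum.swap)
  then show ?thesis using assms dvis_sum_eq_1 by simp
qed

lemma V_eq_discounted_sum: "V P R \<gamma> \<pi> s = discounted_sum P \<gamma> \<pi> (pol_cost R \<pi>) s"
  unfolding V_def discounted_sum_def pol_cost_def by (simp add: sum_distrib_left mult.assoc)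

lemma V_bellman:
  "\<pi> \<in> policies \<Longrightarrow> V P R \<gamma> \<pi> s = pol_cost R \<pi> s + \<gamma> * (\<Sum>u\<in>UNIV. Ppol P \<pi> s u * V P R \<gamma> \<pi> u)"
  unfolding V_eq_discounted_sum by (rule discounted_sum_bellman)

lemma V_nonneg_le:
  assumes "\<pi> \<in> policies"
  shows "0 \<le> V P R \<gamma> \<pi> s" "V P R \<gamma> \<pi> s \<le> 1 / (1 - \<gamma>)"
proof -
  have cost: "0 \<le> pol_cost R \<pi> u" "pol_cost R \<pi> u \<le> 1" for u
    using abs_convex_combination_le[of "\<lambda>a. \<pi> u $ a" "R u" 1]
      policies_nonneg[OF assms] policies_sum_eq_1[OF assms] R_nonneg R_le_1
    by (auto simp: pol_cost_def intro!: sum_nonneg)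
  have V: "V P R \<gamma> \<pi> s = (\<Sum>s'\<in>UNIV. dvis P \<gamma> \<pi> s s' * pol_cost R \<pi> s') / (1 - \<gamma>)"
    unfolding V_eq_discounted_sum discounted_sum_eq_dvis[OF assms] ..
  have "0 \<le> (\<Sum>s'\<in>UNIV. dvis P \<gamma> \<pi> s s' * pol_cost R \<pi> s')"
    by (intro sum_nonneg mult_nonneg_nonneg dvis_nonneg[OF assms] cost)
  then show "0 \<le> V P R \<gamma> \<pi> s"
    unfolding V using discount_less_1 by simp
  have "(\<Sum>s'\<in>UNIV. dvis P \<gamma> \<pi> s s' * pol_cost R \<pi> s') \<le> 1"
    using abs_convex_combination_le[of "dvis P \<gamma> \<pi> s" "pol_cost R \<pi>" 1]
      dvis_nonneg[OF assms] dvis_sum_eq_1[OF assms] cost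
    by auto
  then show "V P R \<gamma> \<pi> s \<le> 1 / (1 - \<gamma>)"
    unfolding V using discount_less_1 by (simp add: divide_right_mono)
qed

lemma inner_Q:
  "inner (Q P R \<gamma> \<pi> s) (\<pi>' s) = pol_cost R \<pi>' s + \<gamma> * (\<Sum>u\<in>UNIV. Ppol P \<pi>' s u * V P R \<gamma> \<pi> u)"
proof -
  have "inner (Q P R \<gamma> \<pi> s) (\<pi>' s)
      = (\<Sum>a\<in>UNIV. \<pi>' s $ a * R s a) + \<gamma> * (\<Sum>a\<in>UNIV. \<Sum>u\<in>UNIV. \<pi>' s $ a * P s a u * V P R \<gamma> \<pi> u)"
    by (simp add: inner_vec_def Q_def algebra_simps sum.distrib sum_distrib_left)
  also have "(\<Sum>a\<in>UNIV. \<Sum>u\<in>UNIV. \<pi>' s $ a * P s a u * V P R \<gamma> \<pi> u)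
      = (\<Sum>u\<in>UNIV. Ppol P \<pi>' s u * V P R \<gamma> \<pi> u)"
    unfolding Ppol_def by (subst sum.swap) (simp add: sum_distrib_right)
  finally show ?thesis by (simp add: pol_cost_def)
qed

lemma performance_difference:
  assumes \<pi>: "\<pi> \<in> policies" and \<pi>': "\<pi>' \<in> policies"
  shows "V P R \<gamma> \<pi>' s - V P R \<gamma> \<pi> s
           = (\<Sum>u\<in>UNIV. dvis P \<gamma> \<pi>' s u * inner (Q P R \<gamma> \<pi> u) (\<pi>' u - \<pi> u)) / (1 - \<gamma>)"
proof -
  have "inner (Q P R \<gamma> \<pi> u) (\<pi> u) = V P R \<gamma> \<pi> u" for u
    using inner_Q[of \<pi> u \<pi>] V_bellman[OF \<pi>, of u] by linarith
  then have adv: "inner (Q P R \<gamma> \<pi> u) (\<pi>' u - \<pi> u)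
      = pol_cost R \<pi>' u + \<gamma> * (\<Sum>v\<in>UNIV. Ppol P \<pi>' u v * V P R \<gamma> \<pi> v) - V P R \<gamma> \<pi> u" for u
    by (simp add: inner_diff_right inner_Q)
  have diff: "\<gamma> * (\<Sum>v\<in>UNIV. Ppol P \<pi>' u v * (V P R \<gamma> \<pi>' v - V P R \<gamma> \<pi> v))
      = \<gamma> * (\<Sum>v\<in>UNIV. Ppol P \<pi>' u v * V P R \<gamma> \<pi>' v) - \<gamma> * (\<Sum>v\<in>UNIV. Ppol P \<pi>' u v * V P R \<gamma> \<pi> v)" for u
    by (simp add: right_diff_distrib sum_subtractf)
  have "V P R \<gamma> \<pi>' u - V P R \<gamma> \<pi> u = inner (Q P R \<gamma> \<pi> u) (\<pi>' u - \<pi> u)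
      + \<gamma> * (\<Sum>v\<in>UNIV. Ppol P \<pi>' u v * (V P R \<gamma> \<pi>' v - V P R \<gamma> \<pi> v))" for u
    using adv[of u] diff[of u] V_bellman[OF \<pi>', of u] by linarith
  then have "V P R \<gamma> \<pi>' s - V P R \<gamma> \<pi> s
      = discounted_sum P \<gamma> \<pi>' (\<lambda>u. inner (Q P R \<gamma> \<pi> u) (\<pi>' u - \<pi> u)) s"
    by (rule discounted_sum_unique[OF \<pi>'])
  then show ?thesis unfolding discounted_sum_eq_dvis[OF \<pi>'] .
qed

lemma Vrho_performance_difference:
  assumes "\<pi> \<in> policies" "\<pi>' \<in> policies"
  shows "Vrho P R \<gamma> \<rho> \<pi>' - Vrho P R \<gamma> \<rho> \<pi>
           = (\<Sum>u\<in>UNIV. drho P \<gamma> \<rho> \<pi>' u * inner (Q P R \<gamma> \<pi> u) (\<pi>' u - \<pi> u)) / (1 - \<gamma>)"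
proof -
  have "Vrho P R \<gamma> \<rho> \<pi>' - Vrho P R \<gamma> \<rho> \<pi>
      = (\<Sum>s\<in>UNIV. \<rho> s * (V P R \<gamma> \<pi>' s - V P R \<gamma> \<pi> s))"
    by (simp add: Vrho_def sum_subtractf algebra_simps)
  also have "\<dots> = (\<Sum>s\<in>UNIV. \<Sum>u\<in>UNIV. \<rho> s * dvis P \<gamma> \<pi>' s u * inner (Q P R \<gamma> \<pi> u) (\<pi>' u - \<pi> u)) / (1 - \<gamma>)"
    by (simp add: performance_difference[OF assms] sum_divide_distrib sum_distrib_left mult.assoc)
  also have "\<dots> = (\<Sum>u\<in>UNIV. drho P \<gamma> \<rho> \<pi>' u * inner (Q P R \<gamma> \<pi> u) (\<pi>' u - \<pi> u)) / (1 - \<gamma>)"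
    unfolding drho_def by (subst sum.swap) (simp add: sum_distrib_right)
  finally show ?thesis .
qed

end

lemma Vrho_optimal_le_Vstar:
  assumes "\<pi>star \<in> policies" "\<forall>\<pi>'\<in>policies. \<forall>s. V P R \<gamma> \<pi>star s \<le> V P R \<gamma> \<pi>' s"
    and "\<forall>s. 0 \<le> \<rho> s"
  shows "Vrho P R \<gamma> \<rho> \<pi>star \<le> Vstar P R \<gamma> \<rho>"
proof -
  have "Vrho P R \<gamma> \<rho> \<pi>star \<le> Vrho P R \<gamma> \<rho> \<pi>'" if "\<pi>' \<in> policies" for \<pi>'
    unfolding Vrho_def using assms(2,3) that by (intro sum_mono mult_left_mono) simp_all
  then show ?thesis
    unfolding Vstar_def using assms(1) by (intro cINF_greatest) auto
qed

section \<open>Policy mirror descent\<close>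

lemma sublinear_rate_from_potential:
  fixes E \<Psi> D :: "nat \<Rightarrow> real"
  assumes step: "\<And>k. \<eta> * (\<Psi> (Suc k) - \<Psi> k) + c * E k \<le> D k - D (Suc k)"
    and "decseq E" "0 < c" "0 \<le> \<eta>"
    and "\<And>k. 0 \<le> D k" "\<And>k. 0 \<le> \<Psi> k" "\<And>k. \<Psi> k \<le> B"
  shows "E n \<le> (D 0 + \<eta> * B) / (c * (real n + 1))"
proof -
  have telescope: "\<eta> * (\<Psi> n - \<Psi> 0) + c * (\<Sum>k<n. E k) \<le> D 0 - D n" for n
  proof (induction n)
    case (Suc n)
    then show ?case using step[of n] by (simp add: algebra_simps)
  qed simp
  have "(real n + 1) * E n = (\<Sum>k<Suc n. E n)" by simp
  also have "\<dots> \<le> (\<Sum>k<Suc n. E k)"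
    using \<open>decseq E\<close> by (intro sum_mono) (simp add: decseq_def)
  finally have "c * ((real n + 1) * E n) \<le> c * (\<Sum>k<Suc n. E k)"
    using \<open>0 < c\<close> by simp
  moreover have "\<eta> * (\<Psi> 0 - \<Psi> (Suc n)) \<le> \<eta> * B"
    using assms(4,6,7) by (metis diff_le_eq add_increasing2 mult_left_mono)
  ultimately have "c * (real n + 1) * E n \<le> D 0 + \<eta> * B"
    using telescope[of "Suc n"] assms(5)[of "Suc n"]
    by (simp add: right_diff_distrib mult.assoc)
  moreover have "0 < c * (real n + 1)" using \<open>0 < c\<close> by simp
  ultimately show ?thesis
    by (simp add: pos_le_divide_eq mult.commute[of "E n"])
qed

locale policy_mirror_descent = mdp P R \<gamma>
  for P :: "'s::finite \<Rightarrow> 'a::finite \<Rightarrow> 's \<Rightarrow> real" and R \<gamma> +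
  fixes C :: "(real ^ 'a) set" and h :: "real ^ 'a \<Rightarrow> real"
    and \<eta> :: real and \<pi> :: "nat \<Rightarrow> 's \<Rightarrow> real ^ 'a"
  assumes legendre: "legendre C h"
    and simplex_subset: "act_simplex \<subseteq> C"
    and rel_interior_simplex_subset: "rel_interior act_simplex \<subseteq> rel_interior C"
    and step_size_pos: "0 < \<eta>"
    and init: "\<pi> 0 \<in> rint_policies"
    and pmd: "is_pmd P R \<gamma> h (\<lambda>_. \<eta>) \<pi>"
begin

lemma convex_on_h: "convex_on C h"
  and h_differentiable: "x \<in> interior C \<Longrightarrow> h differentiable (at x)"
  using legendre by (auto simp: legendre_def)

lemma mirror_step_in_simplex: "\<pi> (Suc k) s \<in> act_simplex"
  and mirror_step_minimal: "p \<in> act_simplex \<Longrightarrow>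
    \<eta> * inner (Q P R \<gamma> (\<pi> k) s) (\<pi> (Suc k) s) + bregman h (\<pi> (Suc k) s) (\<pi> k s)
      \<le> \<eta> * inner (Q P R \<gamma> (\<pi> k) s) p + bregman h p (\<pi> k s)"
  using pmd by (auto simp: is_pmd_def is_arg_min_def not_less)

lemma iterate_in_policies: "\<pi> k \<in> policies"
  using init mirror_step_in_simplex
  by (cases k) (auto simp: policies_def rint_policies_def intro: subsetD[OF rel_interior_subset])

lemma initial_in_interior: "\<pi> 0 s \<in> interior C"
proof -
  have "interior C \<noteq> {}" using legendre by (simp add: legendre_def)
  with init rel_interior_simplex_subset show ?thesis
    by (auto simp: rint_policies_def rel_interior_nonempty_interior)
qed

lemma iterate_in_interior: "\<pi> k s \<in> interior C"
proof (induction k arbitrary: s)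
  case 0
  show ?case by (rule initial_in_interior)
next
  case (Suc k)
  define D where "D = frechet_derivative h (at (\<pi> k s))"
  have "linear D"
    using h_differentiable[OF Suc.IH] frechet_derivative_works has_derivative_linear D_def by blast
  define l where "l p = \<eta> * inner (Q P R \<gamma> (\<pi> k) s) p - D p" for p
  have "linear l"
    using \<open>linear D\<close> unfolding l_def
    by (intro linearI) (simp_all add: linear_add linear_scale inner_add_right algebra_simps)
  have "\<pi> 0 s \<in> act_simplex"
    using iterate_in_policies by (simp add: policies_def)
  show ?case
  proof (rule legendre_minimizer_in_interior[OF legendre convex_act_simplex simplex_subset
        \<open>\<pi> 0 s \<in> act_simplex\<close> initial_in_interior \<open>linear l\<close> mirror_step_in_simplex])
    fix p :: "real ^ 'a" assume "p \<in> act_simplex"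
    have "\<eta> * inner (Q P R \<gamma> (\<pi> k) s) q + bregman h q (\<pi> k s) = h q + l q - h (\<pi> k s) + D (\<pi> k s)" for q
      using \<open>linear D\<close> by (simp add: bregman_def l_def D_def[symmetric] linear_diff)
    with mirror_step_minimal[OF \<open>p \<in> act_simplex\<close>, of k s]
    show "h (\<pi> (Suc k) s) + l (\<pi> (Suc k) s) \<le> h p + l p" by simp
  qed
qed

lemma bregman_iterate_nonneg: "p \<in> act_simplex \<Longrightarrow> 0 \<le> bregman h p (\<pi> k s)"
  using bregman_nonneg[OF convex_on_h _ _ h_differentiable[OF iterate_in_interior]]
    simplex_subset iterate_in_interior interior_subset by blast

lemma three_point_step:
  assumes "p \<in> act_simplex"
  shows "\<eta> * inner (Q P R \<gamma> (\<pi> k) s) (\<pi> (Suc k) s) + bregman h (\<pi> (Suc k) s) (\<pi> k s)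
           + bregman h p (\<pi> (Suc k) s)
         \<le> \<eta> * inner (Q P R \<gamma> (\<pi> k) s) p + bregman h p (\<pi> k s)"
  using bregman_prox_three_point[of h "\<pi> k s" "\<pi> (Suc k) s" act_simplex p "\<eta> *\<^sub>R Q P R \<gamma> (\<pi> k) s"]
    h_differentiable[OF iterate_in_interior] convex_act_simplex mirror_step_in_simplex assms
    mirror_step_minimal
  by simp

lemma Q_descent: "inner (Q P R \<gamma> (\<pi> k) s) (\<pi> (Suc k) s - \<pi> k s) \<le> 0"
proof -
  have "\<pi> k s \<in> act_simplex"
    using iterate_in_policies by (simp add: policies_def)
  from three_point_step[OF this, of k s]
  have "\<eta> * inner (Q P R \<gamma> (\<pi> k) s) (\<pi> (Suc k) s - \<pi> k s) \<le> 0"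
    using bregman_self[OF h_differentiable[OF iterate_in_interior]]
      bregman_iterate_nonneg[OF mirror_step_in_simplex[of k s], of k s]
      bregman_iterate_nonneg[OF \<open>\<pi> k s \<in> act_simplex\<close>, of "Suc k" s]
    by (smt (verit) inner_diff_right right_diff_distrib)
  then show ?thesis using step_size_pos by (simp add: mult_le_0_iff)
qed

lemma V_improvement:
  "V P R \<gamma> (\<pi> (Suc k)) s - V P R \<gamma> (\<pi> k) s \<le> inner (Q P R \<gamma> (\<pi> k) s) (\<pi> (Suc k) s - \<pi> k s)"
proof -
  define d where "d = dvis P \<gamma> (\<pi> (Suc k)) s"
  define g where "g u = inner (Q P R \<gamma> (\<pi> k) u) (\<pi> (Suc k) u - \<pi> k u)" for u
  have "(\<Sum>u\<in>UNIV. d u * g u) = d s * g s + (\<Sum>u\<in>UNIV - {s}. d u * g u)"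
    by (simp add: sum.remove)
  also have "(\<Sum>u\<in>UNIV - {s}. d u * g u) \<le> 0"
    unfolding d_def g_def by (intro sum_nonpos mult_nonneg_nonpos dvis_nonneg iterate_in_policies Q_descent)
  also have "d s * g s \<le> (1 - \<gamma>) * g s"
    unfolding d_def g_def by (intro mult_right_mono_neg dvis_diag_ge iterate_in_policies Q_descent)
  finally have "(\<Sum>u\<in>UNIV. d u * g u) / (1 - \<gamma>) \<le> g s"
    using discount_less_1 by (simp add: pos_divide_le_eq mult.commute)
  then show ?thesis
    unfolding performance_difference[OF iterate_in_policies iterate_in_policies] d_def g_def .
qed

lemma V_iterate_decreasing: "V P R \<gamma> (\<pi> (Suc k)) s \<le> V P R \<gamma> (\<pi> k) s"
  using V_improvement[of k s] Q_descent[of k s] by simp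

lemma potential_step:
  assumes "p \<in> act_simplex"
  shows "\<eta> * (V P R \<gamma> (\<pi> (Suc k)) s - V P R \<gamma> (\<pi> k) s) + \<eta> * inner (Q P R \<gamma> (\<pi> k) s) (\<pi> k s - p)
         \<le> bregman h p (\<pi> k s) - bregman h p (\<pi> (Suc k) s)"
proof -
  have "\<eta> * (V P R \<gamma> (\<pi> (Suc k)) s - V P R \<gamma> (\<pi> k) s)
      \<le> \<eta> * inner (Q P R \<gamma> (\<pi> k) s) (\<pi> (Suc k) s - \<pi> k s)"
    using V_improvement step_size_pos by (simp add: mult_left_mono)
  with three_point_step[OF assms, of k s] bregman_iterate_nonneg[OF mirror_step_in_simplex[of k s], of k s]
  show ?thesis
    by (simp add: inner_diff_right algebra_simps)
qed

lemma Vrho_potential_step: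
  assumes "\<pi>' \<in> policies" "\<forall>s. 0 \<le> \<rho> s"
  shows "\<eta> * ((\<Sum>s\<in>UNIV. drho P \<gamma> \<rho> \<pi>' s * V P R \<gamma> (\<pi> (Suc k)) s)
                - (\<Sum>s\<in>UNIV. drho P \<gamma> \<rho> \<pi>' s * V P R \<gamma> (\<pi> k) s))
           + \<eta> * (1 - \<gamma>) * (Vrho P R \<gamma> \<rho> (\<pi> k) - Vrho P R \<gamma> \<rho> \<pi>')
         \<le> (\<Sum>s\<in>UNIV. drho P \<gamma> \<rho> \<pi>' s * bregman h (\<pi>' s) (\<pi> k s))
           - (\<Sum>s\<in>UNIV. drho P \<gamma> \<rho> \<pi>' s * bregman h (\<pi>' s) (\<pi> (Suc k) s))"
    (is "\<eta> * (?\<Psi> (Suc k) - ?\<Psi> k) + \<eta> * (1 - \<gamma>) * ?E \<le> ?D k - ?D (Suc k)")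
proof -
  let ?d = "drho P \<gamma> \<rho> \<pi>'"
  have "?E = - ((\<Sum>s\<in>UNIV. ?d s * inner (Q P R \<gamma> (\<pi> k) s) (\<pi>' s - \<pi> k s)) / (1 - \<gamma>))"
    using Vrho_performance_difference[OF iterate_in_policies assms(1), of \<rho> k] by simp
  then have "(1 - \<gamma>) * ?E = - (\<Sum>s\<in>UNIV. ?d s * inner (Q P R \<gamma> (\<pi> k) s) (\<pi>' s - \<pi> k s))"
    using discount_less_1 by simp
  also have "\<dots> = (\<Sum>s\<in>UNIV. ?d s * inner (Q P R \<gamma> (\<pi> k) s) (\<pi> k s - \<pi>' s))"
    by (simp add: sum_negf[symmetric] inner_diff_right right_diff_distrib)
  finally have gap: "(1 - \<gamma>) * ?E = (\<Sum>s\<in>UNIV. ?d s * inner (Q P R \<gamma> (\<pi> k) s) (\<pi> k s - \<pi>' s))" .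
  have "\<eta> * (?\<Psi> (Suc k) - ?\<Psi> k) + \<eta> * (1 - \<gamma>) * ?E
      = (\<Sum>s\<in>UNIV. ?d s * (\<eta> * (V P R \<gamma> (\<pi> (Suc k)) s - V P R \<gamma> (\<pi> k) s)
                           + \<eta> * inner (Q P R \<gamma> (\<pi> k) s) (\<pi> k s - \<pi>' s)))"
    unfolding mult.assoc[of \<eta> "1 - \<gamma>"] gap
    by (simp add: sum_distrib_left sum.distrib sum_subtractf algebra_simps)
  also have "\<dots> \<le> (\<Sum>s\<in>UNIV. ?d s * (bregman h (\<pi>' s) (\<pi> k s) - bregman h (\<pi>' s) (\<pi> (Suc k) s)))"
    using assms by (intro sum_mono mult_left_mono potential_step drho_nonneg) (auto simp: policies_def)
  also have "\<dots> = ?D k - ?D (Suc k)"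
    by (simp add: right_diff_distrib sum_subtractf)
  finally show ?thesis .
qed

lemma Vrho_convergence_rate:
  assumes "\<pi>' \<in> policies" "\<forall>s. 0 \<le> \<rho> s" "(\<Sum>s\<in>UNIV. \<rho> s) = 1"
  shows "Vrho P R \<gamma> \<rho> (\<pi> k) - Vrho P R \<gamma> \<rho> \<pi>'
           \<le> 1 / (real k + 1) *
              ((\<Sum>s\<in>UNIV. drho P \<gamma> \<rho> \<pi>' s * bregman h (\<pi>' s) (\<pi> 0 s)) / (\<eta> * (1 - \<gamma>))
               + 1 / (1 - \<gamma>)^2)"
proof -
  define d where "d = drho P \<gamma> \<rho> \<pi>'"
  define \<Psi> where "\<Psi> k = (\<Sum>s\<in>UNIV. d s * V P R \<gamma> (\<pi> k) s)" for k
  define D where "D k = (\<Sum>s\<in>UNIV. d s * bregman h (\<pi>' s) (\<pi> k s))" for k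
  define E where "E k = Vrho P R \<gamma> \<rho> (\<pi> k) - Vrho P R \<gamma> \<rho> \<pi>'" for k
  have d: "0 \<le> d s" "(\<Sum>s\<in>UNIV. d s) = 1" for s
    using drho_nonneg drho_sum_eq_1 assms by (simp_all add: d_def)
  have "\<eta> * (\<Psi> (Suc k) - \<Psi> k) + \<eta> * (1 - \<gamma>) * E k \<le> D k - D (Suc k)" for k
    using Vrho_potential_step[OF assms(1,2)] by (simp add: \<Psi>_def D_def E_def d_def)
  moreover have "decseq E"
    unfolding E_def Vrho_def
    by (intro decseq_SucI diff_right_mono sum_mono mult_left_mono V_iterate_decreasing) (use assms in auto)
  moreover have "0 \<le> D k" for k
    using assms(1) unfolding D_def
    by (intro sum_nonneg mult_nonneg_nonneg d bregman_iterate_nonneg) (simp add: policies_def)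
  moreover have "0 \<le> \<Psi> k" for k
    unfolding \<Psi>_def by (intro sum_nonneg mult_nonneg_nonneg d V_nonneg_le iterate_in_policies)
  moreover have "\<Psi> k \<le> 1 / (1 - \<gamma>)" for k
    using abs_convex_combination_le[of d "V P R \<gamma> (\<pi> k)" "1 / (1 - \<gamma>)"] d
      V_nonneg_le[OF iterate_in_policies]
    by (simp add: \<Psi>_def)
  ultimately have "E k \<le> (D 0 + \<eta> * (1 / (1 - \<gamma>))) / (\<eta> * (1 - \<gamma>) * (real k + 1))"
    using step_size_pos discount_less_1
    by (intro sublinear_rate_from_potential[where \<Psi> = \<Psi>]) auto
  also have "\<dots> = 1 / (real k + 1) * (D 0 / (\<eta> * (1 - \<gamma>)) + 1 / (1 - \<gamma>)^2)"
  proof -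
    have "(D 0 + \<eta> * (1 / a)) / (\<eta> * a * (real k + 1)) = 1 / (real k + 1) * (D 0 / (\<eta> * a) + 1 / a^2)"
      if "0 < a" for a
      using step_size_pos that by (simp add: field_simps power2_eq_square)
    then show ?thesis using discount_less_1 by simp
  qed
  finally show ?thesis by (simp add: E_def D_def d_def)
qed

end

theorem theorem8:
  fixes P :: "'s::finite \<Rightarrow> 'a::finite \<Rightarrow> 's \<Rightarrow> real"
    and R :: "'s \<Rightarrow> 'a \<Rightarrow> real"
    and \<gamma> \<eta> :: real
    and C :: "(real ^ 'a) set" and h :: "real ^ 'a \<Rightarrow> real"
    and \<pi> :: "nat \<Rightarrow> 's \<Rightarrow> real ^ 'a"
    and \<pi>star :: "'s \<Rightarrow> real ^ 'a"
    and \<rho> :: "'s \<Rightarrow> real"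
  assumes mdp: "is_mdp P R \<gamma>"
    and leg: "legendre C h"
    and dom: "act_simplex \<subseteq> C" "rel_interior act_simplex \<subseteq> rel_interior C"
    and eta: "\<eta> > 0"
    and init: "\<pi> 0 \<in> rint_policies"
    and pmd: "is_pmd P R \<gamma> h (\<lambda>_. \<eta>) \<pi>"
    and opt: "\<pi>star \<in> policies" "\<forall>\<pi>'\<in>policies. \<forall>s. V P R \<gamma> \<pi>star s \<le> V P R \<gamma> \<pi>' s"
    and rho: "\<forall>s. 0 \<le> \<rho> s" "(\<Sum>s\<in>UNIV. \<rho> s) = 1"
  shows "\<forall>k::nat. Vrho P R \<gamma> \<rho> (\<pi> k) - Vstar P R \<gamma> \<rho>
           \<le> 1 / (real k + 1) *
              ((\<Sum>s\<in>UNIV. drho P \<gamma> \<rho> \<pi>star s * bregman h (\<pi>star s) (\<pi> 0 s)) / (\<eta> * (1 - \<gamma>))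
               + 1 / (1 - \<gamma>)^2)"
proof -
  interpret policy_mirror_descent P R \<gamma> C h \<eta> \<pi>
    by unfold_locales (fact mdp leg dom eta init pmd)+
  have "Vrho P R \<gamma> \<rho> \<pi>star \<le> Vstar P R \<gamma> \<rho>"
    by (rule Vrho_optimal_le_Vstar[OF opt rho(1)])
  then show ?thesis
    by (intro allI order_trans[OF diff_left_mono Vrho_convergence_rate[OF opt(1) rho]])
qed

end
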